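(* For all complex $x,y$, $$\sum_{n=0}^{\infty}R_n(y)\frac{x^n}{n!}=e^{y}\int_0^{y}e^{-t}I_0(2\sqrt{xt})\,dt=e^{y}\sum_{n=0}^{\infty}(-1)^nL_n(x)\frac{y^{n+1}}{(n+1)!}.$$
   Context: For an integer $n\ge 0$ and complex $y$, $R_n(y)=e^y-1-\frac{y}{1!}-\frac{y^2}{2!}-\dots-\frac{y^n}{n!}=e^y-\sum_{k=0}^n\frac{y^k}{k!}$. $I_0(2\sqrt{z})=\sum_{n\ge0}\frac{z^n}{(n!)^2}$ (an entire function of $z$). $L_n(x)=\sum_{k=0}^{n}\binom{n}{k}\frac{(-1)^kx^k}{k!}$ are the Laguerre polynomials. The integral is along the segment from $0$ to $y$. *)

theory Defs
  imports "HOL-Complex_Analysis.Complex_Analysis"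
begin

definition expRem :: "nat \<Rightarrow> complex \<Rightarrow> complex" where
  "expRem n y = exp y - (\<Sum>k\<le>n. y ^ k / fact k)"

text \<open>The entire function z \<mapsto> I_0(2 sqrt z) = sum_n z^n/(n!)^2.\<close>
definition besselI0sq :: "complex \<Rightarrow> complex" where
  "besselI0sq z = (\<Sum>n. z ^ n / (fact n)^2)"

definition laguerre :: "nat \<Rightarrow> complex \<Rightarrow> complex" where
  "laguerre n x = (\<Sum>k\<le>n. of_nat (n choose k) * (-1) ^ k * x ^ k / fact k)"

end

theory Submission
  imports Defs
begin

text \<open>Both series arise by expanding \<open>e\<^sup>-\<^sup>t I\<^sub>0(2\<surd>(xt))\<close> in powers and integrating
  termwise along the segment from \<open>0\<close> to \<open>y\<close>, which the Weierstrass M-test justifies.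
  Expanding only the Bessel factor gives the terms \<open>x\<^sup>n/(n!)\<^sup>2 e\<^sup>-\<^sup>t t\<^sup>n\<close>, and
  \<open>\<integral>\<^sub>0\<^sup>y e\<^sup>-\<^sup>t t\<^sup>n dt = n! e\<^sup>-\<^sup>y R\<^sub>n(y)\<close> because \<open>-n! e\<^sup>-\<^sup>t \<Sum>\<^sub>k\<^sub>\<le>\<^sub>n t\<^sup>k/k!\<close> is a
  primitive. Multiplying out both factors instead (a Cauchy product) gives the power series
  \<open>\<Sum>\<^sub>m (-1)\<^sup>m L\<^sub>m(x) t\<^sup>m/m!\<close>, whose termwise integral is the Laguerre series.\<close>

lemma sums_contour_integral_linepath:
  fixes f :: "nat \<Rightarrow> complex \<Rightarrow> complex"
  assumes sums: "\<And>t. t \<in> closed_segment a b \<Longrightarrow> (\<lambda>n. f n t) sums F t"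
    and bound: "\<And>n t. t \<in> closed_segment a b \<Longrightarrow> norm (f n t) \<le> M n"
    and "summable M"
    and cont: "\<And>n. continuous_on (closed_segment a b) (f n)"
    and integral: "\<And>n. (f n has_contour_integral I n) (linepath a b)"
  shows "F contour_integrable_on linepath a b"
    and "I sums contour_integral (linepath a b) F"
proof -
  have "uniform_limit (path_image (linepath a b)) (\<lambda>n t. \<Sum>i<n. f i t) (\<lambda>t. \<Sum>i. f i t) sequentially"
    using bound \<open>summable M\<close> by (intro Weierstrass_m_test) auto
  moreover have "continuous_on (path_image (linepath a b)) (\<lambda>t. \<Sum>i<n. f i t)" for n
    using cont by (auto intro!: continuous_on_sum)
  ultimately obtain I' J
    where I': "\<And>n. ((\<lambda>t. \<Sum>i<n. f i t) has_contour_integral I' n) (linepath a b)"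
      and J: "((\<lambda>t. \<Sum>i. f i t) has_contour_integral J) (linepath a b)"
      and "I' \<longlonglongrightarrow> J"
    by (rule uniform_limit_contour_integral_linepath) auto
  have "((\<lambda>t. \<Sum>i<n. f i t) has_contour_integral (\<Sum>i<n. I i)) (linepath a b)" for n
    using integral by (intro has_contour_integral_sum) auto
  then have "I' = (\<lambda>n. \<Sum>i<n. I i)"
    using I' has_contour_integral_unique by blast
  with \<open>I' \<longlonglongrightarrow> J\<close> have "I sums J"
    by (simp add: sums_def)
  have "(F has_contour_integral J) (linepath a b)"
    using J by (rule has_contour_integral_eq) (metis sums sums_unique path_image_linepath)
  then show "F contour_integrable_on linepath a b" and "I sums contour_integral (linepath a b) F"
    using \<open>I sums J\<close> contour_integral_unique contour_integrable_on_def by auto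
qed

lemma norm_le_of_mem_closed_segment_0:
  fixes y :: "'a :: real_normed_vector"
  assumes "t \<in> closed_segment 0 y"
  shows "norm t \<le> norm y"
proof -
  obtain u where "0 \<le> u" "u \<le> 1" "t = u *\<^sub>R y"
    using assms by (auto simp: in_segment)
  then show ?thesis
    using mult_right_mono[of u 1 "norm y"] by auto
qed

lemma summable_norm_power_divide_fact:
  fixes z :: "'a :: real_normed_field"
  shows "summable (\<lambda>n. norm (z ^ n / fact n))"
  using summable_exp[of "norm z"]
  by (simp add: norm_mult norm_inverse norm_power divide_inverse mult.commute)

lemma summable_norm_power_divide_fact_squared:
  fixes z :: "'a :: real_normed_field"
  shows "summable (\<lambda>n. norm (z ^ n / (fact n)\<^sup>2))"
proof (rule summable_comparison_test'[OF summable_norm_power_divide_fact])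
  fix n :: nat
  have "(fact n :: real) \<le> (fact n)\<^sup>2"
    by (simp add: power2_eq_square)
  then have "norm z ^ n / (fact n)\<^sup>2 \<le> norm z ^ n / fact n"
    by (intro divide_left_mono) auto
  then show "norm (norm (z ^ n / (fact n)\<^sup>2)) \<le> norm (z ^ n / fact n)"
    by (simp add: norm_divide norm_power)
qed

lemma exp_sums_power_divide_fact:
  fixes z :: "'a :: {real_normed_field, banach}"
  shows "(\<lambda>n. z ^ n / fact n) sums exp z"
  using exp_converges[of z] by (simp add: scaleR_conv_of_real divide_inverse mult.commute)

lemma has_contour_integral_linepath_0_power:
  "((\<lambda>t. t ^ n) has_contour_integral (y ^ Suc n / of_nat (Suc n))) (linepath 0 (y::complex))"
proof -
  have "((\<lambda>t. t ^ Suc n / of_nat (Suc n)) has_field_derivative z ^ n) (at z within UNIV)"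
    for z :: complex
    using DERIV_cdivide[OF DERIV_power[OF DERIV_ident, of "Suc n" z UNIV], of "of_nat (Suc n)"]
    by (simp del: of_nat_Suc)
  from contour_integral_primitive[of UNIV, OF this, of "linepath 0 y"]
  show ?thesis by simp
qed

lemma DERIV_exp_minus_times_exp_partial_sum:
  "((\<lambda>t::complex. exp (- t) * (\<Sum>k\<le>n. t ^ k / fact k))
     has_field_derivative (- exp (- z) * z ^ n / fact n)) (at z)"
proof (induction n)
  case 0
  then show ?case by (auto intro!: derivative_eq_intros)
next
  case (Suc n)
  have split: "(\<lambda>t::complex. exp (- t) * (\<Sum>k\<le>Suc n. t ^ k / fact k))
      = (\<lambda>t. exp (- t) * (\<Sum>k\<le>n. t ^ k / fact k) + exp (- t) * t ^ Suc n / fact (Suc n))"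
    by (auto simp: algebra_simps)
  have "((\<lambda>t::complex. exp (- t) * t ^ Suc n / fact (Suc n)) has_field_derivative
      (- exp (- z) * z ^ Suc n + exp (- z) * (of_nat (Suc n) * z ^ n)) / fact (Suc n)) (at z)"
    using DERIV_cdivide[OF DERIV_mult[OF DERIV_exp[THEN DERIV_chain2, OF DERIV_minus[OF DERIV_ident]]
        DERIV_power[OF DERIV_ident, of "Suc n" z UNIV]]]
    by (simp add: algebra_simps)
  note sum_rule = DERIV_add[OF Suc this]
  have "- exp (- z) * z ^ n / fact n
        + (- exp (- z) * z ^ Suc n + exp (- z) * (of_nat (Suc n) * z ^ n)) / fact (Suc n)
      = - exp (- z) * z ^ Suc n / fact (Suc n)"
    by (simp add: fact_Suc divide_simps del: of_nat_Suc)
  then show ?case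
    unfolding split using sum_rule by simp
qed

lemma has_contour_integral_exp_minus_times_power:
  "((\<lambda>t. exp (- t) * t ^ n) has_contour_integral (fact n * exp (- y) * expRem n y))
     (linepath 0 y)"
proof -
  have "((\<lambda>t. - fact n * (exp (- t) * (\<Sum>k\<le>n. t ^ k / fact k))) has_field_derivative
      exp (- z) * z ^ n) (at z within UNIV)" for z :: complex
    using DERIV_cmult[OF DERIV_exp_minus_times_exp_partial_sum[of n z], of "- fact n"] by simp
  from contour_integral_primitive[OF this, of "linepath 0 y"]
  have "((\<lambda>t. exp (- t) * t ^ n) has_contour_integral
      - fact n * (exp (- y) * (\<Sum>k\<le>n. y ^ k / fact k)) + fact n * (\<Sum>k\<le>n. 0 ^ k / fact k))
      (linepath 0 y)"
    by simp
  moreover have "(\<Sum>k\<le>n. (0::complex) ^ k / fact k) = 1"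
    by (induction n) auto
  moreover have "- fact n * (exp (- y) * (\<Sum>k\<le>n. y ^ k / fact k)) + fact n
      = fact n * exp (- y) * expRem n y"
    by (simp add: expRem_def exp_minus field_simps)
  ultimately show ?thesis by simp
qed

lemma laguerre_eq_Cauchy_product_coeff:
  fixes x t :: complex
  shows "(-1) ^ m * laguerre m x / fact m * t ^ m
       = (\<Sum>i\<le>m. (- t) ^ i / fact i * ((x * t) ^ (m - i) / (fact (m - i))\<^sup>2))"
proof -
  have "laguerre m x
      = (\<Sum>i\<le>m. of_nat (m choose (m - i)) * (-1) ^ (m - i) * x ^ (m - i) / fact (m - i))"
    unfolding laguerre_def atLeast0AtMost[symmetric] by (subst sum.atLeastAtMost_rev) simp
  then have "(-1) ^ m * laguerre m x / fact m * t ^ m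
      = (\<Sum>i\<le>m. (-1) ^ m / fact m * t ^ m
          * (of_nat (m choose (m - i)) * (-1) ^ (m - i) * x ^ (m - i) / fact (m - i)))"
    unfolding sum_distrib_left[symmetric] by simp
  also have "\<dots> = (\<Sum>i\<le>m. (- t) ^ i / fact i * ((x * t) ^ (m - i) / (fact (m - i))\<^sup>2))"
  proof (rule sum.cong[OF refl])
    fix i
    assume "i \<in> {..m}"
    then obtain j where m: "m = i + j"
      by (metis atMost_iff le_add_diff_inverse)
    have binomial: "(of_nat ((i + j) choose j) :: complex) = fact (i + j) / (fact j * fact i)"
      using binomial_fact[of j "i + j"] by simp
    have sign: "(-1::complex) ^ (i + j) * (-1) ^ j = (-1) ^ i"
      by (simp add: power_add mult.assoc flip: power_mult_distrib)
    have rearrange: "A / F * (T * U) * (F / (H * G) * B * X / H) = (A * B) * T / G * (X * U / H\<^sup>2)"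
      if "F \<noteq> 0" "G \<noteq> 0" "H \<noteq> 0" for A B F G H T U X :: complex
      using that by (simp add: field_simps power2_eq_square)
    have mi: "m - i = j"
      using m by simp
    show "(-1) ^ m / fact m * t ^ m
          * (of_nat (m choose (m - i)) * (-1) ^ (m - i) * x ^ (m - i) / fact (m - i))
        = (- t) ^ i / fact i * ((x * t) ^ (m - i) / (fact (m - i))\<^sup>2)"
      unfolding mi unfolding m binomial power_add[of t i j] power_minus[of t i] power_mult_distrib
        sign[symmetric] by (rule rearrange) auto
  qed
  finally show ?thesis .
qed

lemma exp_minus_times_besselI0sq_sums:
  "(\<lambda>n. x ^ n / (fact n)\<^sup>2 * (exp (- t) * t ^ n)) sums (exp (- t) * besselI0sq (x * t))"
proof -
  have "(\<lambda>n. (x * t) ^ n / (fact n)\<^sup>2) sums besselI0sq (x * t)"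
    unfolding besselI0sq_def
    by (rule summable_sums[OF summable_norm_cancel[OF summable_norm_power_divide_fact_squared]])
  from sums_mult[OF this, of "exp (- t)"] show ?thesis
    by (simp add: power_mult_distrib mult_ac)
qed

lemma exp_minus_times_besselI0sq_sums_laguerre:
  "(\<lambda>m. (-1) ^ m * laguerre m x / fact m * t ^ m) sums (exp (- t) * besselI0sq (x * t))"
proof -
  have "(\<lambda>m. \<Sum>i\<le>m. (- t) ^ i / fact i * ((x * t) ^ (m - i) / (fact (m - i))\<^sup>2)) sums
      ((\<Sum>n. (- t) ^ n / fact n) * (\<Sum>n. (x * t) ^ n / (fact n)\<^sup>2))"
    by (rule Cauchy_product_sums[OF summable_norm_power_divide_fact
          summable_norm_power_divide_fact_squared])
  then show ?thesis
    unfolding laguerre_eq_Cauchy_product_coeff besselI0sq_def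
      sums_unique[OF exp_sums_power_divide_fact[of "- t"], symmetric] .
qed

lemma contour_integral_exp_minus_times_besselI0sq_expRem:
  fixes x y :: complex
  defines "F \<equiv> \<lambda>t. exp (- t) * besselI0sq (x * t)"
  shows "F contour_integrable_on linepath 0 y"
    and "(\<lambda>n. x ^ n / (fact n)\<^sup>2 * (fact n * exp (- y) * expRem n y))
           sums contour_integral (linepath 0 y) F"
proof -
  have bound: "norm (x ^ n / (fact n)\<^sup>2 * (exp (- t) * t ^ n))
      \<le> exp (norm y) * norm ((x * y) ^ n / (fact n)\<^sup>2)"
    if "t \<in> closed_segment 0 y" for n t
  proof -
    have "norm t \<le> norm y"
      using that by (rule norm_le_of_mem_closed_segment_0)
    then have "norm (exp (- t)) * norm t ^ n \<le> exp (norm y) * norm y ^ n"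
      using norm_exp[of "- t"] by (intro mult_mono power_mono) auto
    then have "norm x ^ n / (fact n)\<^sup>2 * (norm (exp (- t)) * norm t ^ n)
        \<le> norm x ^ n / (fact n)\<^sup>2 * (exp (norm y) * norm y ^ n)"
      by (rule mult_left_mono) auto
    then show ?thesis
      by (simp add: norm_mult norm_divide norm_power power_mult_distrib mult_ac)
  qed
  have summable: "summable (\<lambda>n. exp (norm y) * norm ((x * y) ^ n / (fact n)\<^sup>2))"
    by (rule summable_mult[OF summable_norm_power_divide_fact_squared])
  have continuous: "continuous_on (closed_segment 0 y) (\<lambda>t. x ^ n / (fact n)\<^sup>2 * (exp (- t) * t ^ n))"
    for n
    by (intro continuous_intros)
  have sums: "(\<lambda>n. x ^ n / (fact n)\<^sup>2 * (exp (- t) * t ^ n)) sums F t" for t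
    unfolding F_def by (rule exp_minus_times_besselI0sq_sums)
  have integral: "((\<lambda>t. x ^ n / (fact n)\<^sup>2 * (exp (- t) * t ^ n)) has_contour_integral
      x ^ n / (fact n)\<^sup>2 * (fact n * exp (- y) * expRem n y)) (linepath 0 y)" for n
    by (rule has_contour_integral_lmul[OF has_contour_integral_exp_minus_times_power])
  show "F contour_integrable_on linepath 0 y"
    and "(\<lambda>n. x ^ n / (fact n)\<^sup>2 * (fact n * exp (- y) * expRem n y))
           sums contour_integral (linepath 0 y) F"
    using sums_contour_integral_linepath[OF sums bound summable continuous integral] by auto
qed

lemma contour_integral_exp_minus_times_besselI0sq_laguerre:
  fixes x y :: complex
  defines "F \<equiv> \<lambda>t. exp (- t) * besselI0sq (x * t)"
  shows "(\<lambda>m. (-1) ^ m * laguerre m x / fact m * (y ^ Suc m / of_nat (Suc m)))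
           sums contour_integral (linepath 0 y) F"
proof -
  have bound: "norm ((-1) ^ n * laguerre n x / fact n * t ^ n)
      \<le> norm ((-1) ^ n * laguerre n x / fact n) * norm y ^ n"
    if "t \<in> closed_segment 0 y" for n t
  proof -
    have "norm t ^ n \<le> norm y ^ n"
      using that by (intro power_mono norm_le_of_mem_closed_segment_0) auto
    then show ?thesis
      unfolding norm_mult[of _ "t ^ n"] norm_power by (rule mult_left_mono) simp
  qed
  have "summable (\<lambda>m. (-1) ^ m * laguerre m x / fact m * of_real (norm y + 1) ^ m)"
    by (rule sums_summable[OF exp_minus_times_besselI0sq_sums_laguerre])
  then have "summable (\<lambda>m. norm ((-1) ^ m * laguerre m x / fact m * y ^ m))"
    by (rule powser_insidea) simp
  then have summable: "summable (\<lambda>m. norm ((-1) ^ m * laguerre m x / fact m) * norm y ^ m)"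
    by (simp only: norm_mult norm_power)
  have continuous: "continuous_on (closed_segment 0 y) (\<lambda>t. (-1) ^ n * laguerre n x / fact n * t ^ n)"
    for n
    by (intro continuous_intros)
  have sums: "(\<lambda>m. (-1) ^ m * laguerre m x / fact m * t ^ m) sums F t" for t
    unfolding F_def by (rule exp_minus_times_besselI0sq_sums_laguerre)
  have integral: "((\<lambda>t. (-1) ^ n * laguerre n x / fact n * t ^ n) has_contour_integral
      (-1) ^ n * laguerre n x / fact n * (y ^ Suc n / of_nat (Suc n))) (linepath 0 y)" for n
    by (rule has_contour_integral_lmul[OF has_contour_integral_linepath_0_power])
  show ?thesis
    by (rule sums_contour_integral_linepath(2)[OF sums bound summable continuous integral])
qed

theorem mainTheorem16:
  fixes x y :: complex
  shows "(\<lambda>t. exp (- t) * besselI0sq (x * t)) contour_integrable_on linepath 0 y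
    \<and> (\<lambda>n. expRem n y * x ^ n / fact n) sums
        (exp y * contour_integral (linepath 0 y) (\<lambda>t. exp (- t) * besselI0sq (x * t)))
    \<and> (\<lambda>n. (-1) ^ n * laguerre n x * y ^ (n + 1) / fact (n + 1)) sums
        contour_integral (linepath 0 y) (\<lambda>t. exp (- t) * besselI0sq (x * t))"
proof (intro conjI)
  show "(\<lambda>t. exp (- t) * besselI0sq (x * t)) contour_integrable_on linepath 0 y"
    by (rule contour_integral_exp_minus_times_besselI0sq_expRem(1))
  have "exp y * (x ^ n / (fact n)\<^sup>2 * (fact n * exp (- y) * expRem n y))
      = expRem n y * x ^ n / fact n" for n
    by (simp add: exp_minus field_simps power2_eq_square)
  with sums_mult[OF contour_integral_exp_minus_times_besselI0sq_expRem(2)[of x y], of "exp y"]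
  show "(\<lambda>n. expRem n y * x ^ n / fact n) sums
      (exp y * contour_integral (linepath 0 y) (\<lambda>t. exp (- t) * besselI0sq (x * t)))"
    by (simp only:)
  have "(-1) ^ m * laguerre m x / fact m * (y ^ Suc m / of_nat (Suc m))
      = (-1) ^ m * laguerre m x * y ^ (m + 1) / fact (m + 1)" for m
    by (simp add: fact_Suc field_simps del: of_nat_Suc)
  with contour_integral_exp_minus_times_besselI0sq_laguerre[of x y]
  show "(\<lambda>n. (-1) ^ n * laguerre n x * y ^ (n + 1) / fact (n + 1)) sums
      contour_integral (linepath 0 y) (\<lambda>t. exp (- t) * besselI0sq (x * t))"
    by (simp only:)
qed

end
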